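(* Let $G=K_{1,2,2}$ be the complete 3-partite graph with partite sets $\{x\}$, $\{y_1,y_2\}$, $\{z_1,z_2\}$, and let $L$ be a prime distance labeling of $G$. If $L(x)=0$, then $\{L(y_1),L(y_2),L(z_1),L(z_2)\}=\{2,-2,5,-5\}$ with $L(y_1)=-L(y_2)$ and $L(z_1)=-L(z_2)$. Conversely, if $\{L(y_1),L(y_2),L(z_1),L(z_2)\}=\{2,-2,5,-5\}$ with $L(y_1)=-L(y_2)$ and $L(z_1)=-L(z_2)$, then $L(x)=0$.
   Context: A prime distance labeling of a graph $G$ is an injective map $L:V(G)\to\mathbb{Z}$ such that for every pair of adjacent vertices $u,v$, the integer $|L(u)-L(v)|$ is prime. *)

theory Defs
  imports "HOL-Computational_Algebra.Primes"
begin

definition prime_distance_labeling :: "('v \<Rightarrow> 'v \<Rightarrow> bool) \<Rightarrow> ('v \<Rightarrow> int) \<Rightarrow> bool" where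
  "prime_distance_labeling adj L \<longleftrightarrow>
     inj L \<and> (\<forall>u v. adj u v \<longrightarrow> prime \<bar>L u - L v\<bar>)"

datatype k122_vertex = X | Y1 | Y2 | Z1 | Z2

fun k122_part :: "k122_vertex \<Rightarrow> nat" where
  "k122_part X = 0"
| "k122_part Y1 = 1"
| "k122_part Y2 = 1"
| "k122_part Z1 = 2"
| "k122_part Z2 = 2"

definition k122_adj :: "k122_vertex \<Rightarrow> k122_vertex \<Rightarrow> bool" where
  "k122_adj u v \<longleftrightarrow> k122_part u \<noteq> k122_part v"

end

theory Submission
  imports Defs
begin

text \<open>With the centre labelled 0, every label and every difference of labels across the parts
  \<open>{Y1, Y2}\<close> and \<open>{Z1, Z2}\<close> is a prime up to sign, and such a number is \<open>\<plusminus>2\<close> as soon as it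
  is even. Hence two adjacent odd labels differ by 2, and if \<open>k - 2, k, k + 2\<close> are all primes up
  to sign then \<open>k = \<plusminus>5\<close>, as one of them is divisible by 3. Parity bookkeeping then shows that
  one part is labelled \<open>{2, -2}\<close> and the other \<open>{5, -5}\<close>. Conversely, if the centre \<open>x\<close> is at
  prime distance from \<open>\<plusminus>2\<close> and \<open>\<plusminus>5\<close>, then for \<open>k = 2\<close> or \<open>k = 5\<close> both \<open>x - k\<close> and \<open>x + k\<close>
  are even, hence \<open>\<plusminus>2\<close>, which forces \<open>x = 0\<close>.\<close>

lemma prime_abs_eq_if_dvd:
  fixes p k :: int
  assumes "prime p" "prime \<bar>k\<bar>" "p dvd k"
  shows "\<bar>k\<bar> = p"
  using assms primes_dvd_imp_eq by (metis dvd_abs_iff)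

lemma prime_abs_even: "prime \<bar>k :: int\<bar> \<Longrightarrow> even k \<Longrightarrow> \<bar>k\<bar> = 2"
  by (rule prime_abs_eq_if_dvd) auto

lemma prime_abs_triple:
  fixes k :: int
  assumes "prime \<bar>k - 2\<bar>" "prime \<bar>k\<bar>" "prime \<bar>k + 2\<bar>"
  shows "\<bar>k\<bar> = 5"
proof -
  have "3 dvd k - 2 \<or> 3 dvd k \<or> 3 dvd k + 2"
    by presburger
  then have "\<bar>k - 2\<bar> = 3 \<or> \<bar>k\<bar> = 3 \<or> \<bar>k + 2\<bar> = 3"
    using assms prime_abs_eq_if_dvd[of 3] by auto
  then have "k \<in> {5, -1, 1, 3, -3, -5}"
    by auto
  with assms show ?thesis
    by auto
qed

lemma centre_of_prime_distances:
  fixes x k :: int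
  assumes "prime \<bar>x - k\<bar>" "prime \<bar>x + k\<bar>" "even (x + k)" "k \<noteq> 0"
  shows "x = 0"
proof -
  have "even (x - k)"
    using \<open>even (x + k)\<close> by presburger
  then have "\<bar>x - k\<bar> = 2" "\<bar>x + k\<bar> = 2"
    using assms prime_abs_even by auto
  with \<open>k \<noteq> 0\<close> show ?thesis
    by linarith
qed

text \<open>The labels of the two parts \<open>{a, b}\<close> and \<open>{c, d}\<close> of a prime distance labeling
  of \<open>K\<^sub>1\<^sub>,\<^sub>2\<^sub>,\<^sub>2\<close> whose centre is labelled 0.\<close>
definition centred_k122_labels :: "int \<Rightarrow> int \<Rightarrow> int \<Rightarrow> int \<Rightarrow> bool" where
  "centred_k122_labels a b c d \<longleftrightarrow> a \<noteq> b \<and> c \<noteq> d \<and>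
     prime \<bar>a\<bar> \<and> prime \<bar>b\<bar> \<and> prime \<bar>c\<bar> \<and> prime \<bar>d\<bar> \<and>
     prime \<bar>a - c\<bar> \<and> prime \<bar>a - d\<bar> \<and> prime \<bar>b - c\<bar> \<and> prime \<bar>b - d\<bar>"

lemma centred_k122_labelsD:
  assumes "centred_k122_labels a b c d"
  shows "a \<noteq> b" "c \<noteq> d" "prime \<bar>a\<bar>" "prime \<bar>b\<bar>" "prime \<bar>c\<bar>" "prime \<bar>d\<bar>"
    "prime \<bar>a - c\<bar>" "prime \<bar>a - d\<bar>" "prime \<bar>b - c\<bar>" "prime \<bar>b - d\<bar>"
  using assms unfolding centred_k122_labels_def by auto

lemma centred_k122_labels_swap_left:
  "centred_k122_labels a b c d \<Longrightarrow> centred_k122_labels b a c d"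
  unfolding centred_k122_labels_def by auto

lemma centred_k122_labels_swap_right:
  "centred_k122_labels a b c d \<Longrightarrow> centred_k122_labels a b d c"
  unfolding centred_k122_labels_def by auto

lemma centred_k122_labels_swap_parts:
  "centred_k122_labels a b c d \<Longrightarrow> centred_k122_labels c d a b"
  unfolding centred_k122_labels_def by (auto simp: abs_minus_commute)

lemma centred_k122_labels_even_part:
  assumes "centred_k122_labels a b c d" "even a" "even b"
  shows "{a, b} = {2, -2} \<and> {c, d} = {5, -5}"
proof -
  note labels = centred_k122_labelsD[OF assms(1)]
  have "\<bar>a\<bar> = 2" "\<bar>b\<bar> = 2"
    using labels(3,4) assms(2,3) prime_abs_even by auto
  with labels(1) have ab: "a = 2 \<and> b = -2 \<or> a = -2 \<and> b = 2"
    by arith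
  have "\<bar>v\<bar> = 5" if "prime \<bar>v\<bar>" "prime \<bar>a - v\<bar>" "prime \<bar>b - v\<bar>" for v
  proof (rule prime_abs_triple)
    show "prime \<bar>v - 2\<bar>" "prime \<bar>v + 2\<bar>"
      using ab that(2,3) by (auto simp: abs_minus_commute)
  qed fact
  then have "\<bar>c\<bar> = 5" "\<bar>d\<bar> = 5"
    using labels by blast+
  with labels(2) have "c = 5 \<and> d = -5 \<or> c = -5 \<and> d = 5"
    by arith
  with ab show ?thesis
    by auto
qed

text \<open>On an odd path \<open>a - c - b\<close> both neighbours differ from \<open>c\<close> by \<open>\<plusminus>2\<close>, so
  \<open>c = \<plusminus>5\<close> and \<open>{a, b} = {c - 2, c + 2}\<close>; no label \<open>d \<noteq> c\<close> is then at prime distance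
  from both \<open>a\<close> and \<open>b\<close>.\<close>
lemma centred_k122_labels_no_odd_path:
  assumes "centred_k122_labels a b c d" "odd a" "odd b" "odd c"
  shows False
proof -
  note labels = centred_k122_labelsD[OF assms(1)]
  have "\<bar>a - c\<bar> = 2" "\<bar>b - c\<bar> = 2"
    using labels(7,9) assms(2-4) prime_abs_even[of "a - c"] prime_abs_even[of "b - c"] by auto
  with labels(1) have ab: "a = c - 2 \<and> b = c + 2 \<or> a = c + 2 \<and> b = c - 2"
    by arith
  with labels(3,4) have "prime \<bar>c - 2\<bar>" "prime \<bar>c + 2\<bar>"
    by auto
  with labels(5) have "\<bar>c\<bar> = 5"
    using prime_abs_triple by blast
  then have c: "c = 5 \<or> c = -5"
    by arith
  show False
  proof (cases "even d")
    case True
    with labels(6) have "\<bar>d\<bar> = 2"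
      using prime_abs_even by blast
    then have "d = 2 \<or> d = -2"
      by arith
    with labels(8,10) ab c show False
      by auto
  next
    case False
    then have "\<bar>a - d\<bar> = 2" "\<bar>b - d\<bar> = 2"
      using labels(8,10) assms(2,3) prime_abs_even[of "a - d"] prime_abs_even[of "b - d"] by auto
    with ab labels(2) show False
      by arith
  qed
qed

lemma centred_k122_labels_no_odd_edge:
  assumes "centred_k122_labels a b c d" "odd a" "odd c"
  shows False
proof -
  consider "odd b" | "odd d" | "even b" "even d"
    by blast
  then show False
  proof cases
    case 1
    with assms show False
      by (blast intro: centred_k122_labels_no_odd_path)
  next
    case 2
    with assms show False
      by (blast intro: centred_k122_labels_no_odd_path centred_k122_labels_swap_parts)
  next
    case 3
    note labels = centred_k122_labelsD[OF assms(1)]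
    have "\<bar>b\<bar> = 2" "\<bar>d\<bar> = 2" "\<bar>b - d\<bar> = 2"
      using labels(4,6,10) 3 prime_abs_even by auto
    then show False
      by arith
  qed
qed

lemma centred_k122_labels_classification:
  assumes "centred_k122_labels a b c d"
  shows "{a, b} = {2, -2} \<and> {c, d} = {5, -5} \<or> {a, b} = {5, -5} \<and> {c, d} = {2, -2}"
proof -
  have "even a \<and> even b \<or> even c \<and> even d"
  proof (rule ccontr)
    assume "\<not> ?thesis"
    then consider "odd a" "odd c" | "odd a" "odd d" | "odd b" "odd c" | "odd b" "odd d"
      by blast
    then show False
      by cases (use assms centred_k122_labels_no_odd_edge centred_k122_labels_swap_left
          centred_k122_labels_swap_right in blast)+
  qed
  then show ?thesis
    using assms centred_k122_labels_even_part centred_k122_labels_swap_parts by blast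
qed

theorem mainTheorem5:
  fixes L :: "k122_vertex \<Rightarrow> int"
  assumes "prime_distance_labeling k122_adj L"
  shows "L X = 0 \<longleftrightarrow>
           ({L Y1, L Y2, L Z1, L Z2} = {2, -2, 5, -5} \<and> L Y1 = - L Y2 \<and> L Z1 = - L Z2)"
proof -
  from assms have inj: "inj L" and adj: "\<And>u v. k122_adj u v \<Longrightarrow> prime \<bar>L u - L v\<bar>"
    unfolding prime_distance_labeling_def by auto
  show ?thesis
  proof
    assume "L X = 0"
    with inj adj adj[of X] have "centred_k122_labels (L Y1) (L Y2) (L Z1) (L Z2)"
      unfolding centred_k122_labels_def by (auto simp: inj_eq k122_adj_def)
    then have "{L Y1, L Y2} = {2, -2} \<and> {L Z1, L Z2} = {5, -5} \<or>
        {L Y1, L Y2} = {5, -5} \<and> {L Z1, L Z2} = {2, -2}"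
      by (rule centred_k122_labels_classification)
    then show "{L Y1, L Y2, L Z1, L Z2} = {2, -2, 5, -5} \<and> L Y1 = - L Y2 \<and> L Z1 = - L Z2"
      by (auto simp: doubleton_eq_iff)
  next
    assume labels: "{L Y1, L Y2, L Z1, L Z2} = {2, -2, 5, -5} \<and> L Y1 = - L Y2 \<and> L Z1 = - L Z2"
    have "prime \<bar>L X - k\<bar>" if "k \<in> {2, -2, 5, -5}" for k
    proof -
      from that labels have "k \<in> {L Y1, L Y2, L Z1, L Z2}"
        by argo
      then show ?thesis
        using adj[of X] by (auto simp: k122_adj_def)
    qed
    then have "prime \<bar>L X - 2\<bar>" "prime \<bar>L X + 2\<bar>" "prime \<bar>L X - 5\<bar>" "prime \<bar>L X + 5\<bar>"
      by (metis insertCI diff_minus_eq_add)+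
    then show "L X = 0"
      using centre_of_prime_distances[of "L X" 2] centre_of_prime_distances[of "L X" 5]
      by (cases "even (L X)") auto
  qed
qed

end
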